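(* Let $\Omega,\Omega^*$ be compact metric spaces, $c\in C(\Omega\times\Omega^* )$, and $h_0,h_1\colon[0,+\infty)\to[0,+\infty)$ two finite-valued entropy functions. Let $\mu_1,\mu_2\in\mathcal M_+(\Omega)$, $\nu\in\mathcal M_+(\Omega^* )$, and $\phi_i\in\Phi_{h,c}(\mu_i,\nu)$ for $i=1,2$. Let $U$ be a Borel subset of $\Omega$ and suppose that $\mu_1\leq\mu_2$ on $U$ and $\phi_1\leq\phi_2$ on $\Omega\setminus U$. Then \[ \phi_1\wedge\phi_2\in\Phi_{h,c}(\mu_1,\nu)\quad\text{and}\quad\phi_1\vee\phi_2\in\Phi_{h,c}(\mu_2,\nu). \] Additionally, $-h_0^*(-\phi_1(x))\leq-h_0^*(-\phi_2(x))$ for $x\in\operatorname{supp}(\mu_2-\mu_1)$.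
   Context: An entropy function is a proper, convex, lower semicontinuous $h\colon[0,\infty)\to[0,\infty]$ with $h(s)/s\to+\infty$ as $s\to\infty$; $h^*(r)=\sup_{s\geq0}rs-h(s)$ is its convex conjugate (finite and nondecreasing). For $m\in\mathcal M_+$ (finite positive Borel measures), the internal energy is $H_{h,m}(\rho)=\int h(d\rho/dm)\,dm$ if $\rho$ is positive and $\rho\ll m$, $+\infty$ otherwise. The unbalanced cost is $\mathcal{UT}_{h,c}(\mu,\nu)=\inf_{\pi\in\mathcal M_+(\Omega\times\Omega^* )}H_{h_0,\mu}(\pi_0)+H_{h_1,\nu}(\pi_1)+\int c\,d\pi$, with $\pi_0,\pi_1$ the marginals of $\pi$. With $\phi^c(y)=\sup_{x\in\Omega}\phi(x)-c(x,y)$, by duality $\mathcal{UT}_{h,c}(\mu,\nu)=\sup_{\phi\in C(\Omega)}\int_\Omega-h_0^*(-\phi)\,d\mu-\int_{\Omega^*}h_1^*(\phi^c)\,d\nu$, and $\Phi_{h,c}(\mu,\nu)$ is the set of $\phi\in C(\Omega)$ for which $\int_\Omega-h_0^*(-\phi)\,d\mu-\int_{\Omega^*}h_1^*(\phi^c)\,d\nu=\mathcal{UT}_{h,c}(\mu,\nu)$. $\wedge,\vee$ are pointwise min/max; "$\mu_1\leq\mu_2$ on $U$" means $\mu_1(A)\leq\mu_2(A)$ for all Borel $A\subset U$; the support of a signed measure is that of its total variation. *)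

theory Defs
  imports "HOL-Analysis.Analysis"
begin

text \<open>Finite-valued entropy function on [0,+infinity): nonnegative, convex,
 lower semicontinuous on [0,+infinity), superlinear at infinity.
 Values outside [0,+infinity) are irrelevant.\<close>
definition entropy_fun :: "(real \<Rightarrow> real) \<Rightarrow> bool" where
  "entropy_fun h \<longleftrightarrow>
     (\<forall>s\<ge>0. h s \<ge> 0) \<and> convex_on {0..} h \<and>
     (\<forall>s\<ge>0. \<forall>t. (\<forall>\<^sub>F u in at s within {0..}. h u > t) \<or> h s \<le> t) \<and>
     filterlim (\<lambda>s. h s / s) at_top at_top"

definition conj_fun :: "(real \<Rightarrow> real) \<Rightarrow> real \<Rightarrow> real" where
  "conj_fun h r = (SUP s\<in>{0..}. r * s - h s)"

definition fin_borel_measures :: "'a::topological_space measure set" where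
  "fin_borel_measures = {m. sets m = sets borel \<and> finite_measure m}"

text \<open>Internal energy H_{h,m}(rho) (positivity of rho is built into the type).\<close>
definition int_energy :: "(real \<Rightarrow> real) \<Rightarrow> 'a measure \<Rightarrow> 'a measure \<Rightarrow> ennreal" where
  "int_energy h m \<rho> =
     (if absolutely_continuous m \<rho>
      then (\<integral>\<^sup>+ x. ennreal (h (enn2real (RN_deriv m \<rho> x))) \<partial>m)
      else \<infinity>)"

definition UT :: "(real \<Rightarrow> real) \<Rightarrow> (real \<Rightarrow> real) \<Rightarrow> ('a::metric_space \<Rightarrow> 'b::metric_space \<Rightarrow> real)
    \<Rightarrow> 'a measure \<Rightarrow> 'b measure \<Rightarrow> ereal" where
  "UT h0 h1 c \<mu> \<nu> =
     (INF \<pi>\<in>fin_borel_measures.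
        enn2ereal (int_energy h0 \<mu> (distr \<pi> borel fst))
      + enn2ereal (int_energy h1 \<nu> (distr \<pi> borel snd))
      + ereal (\<integral>p. c (fst p) (snd p) \<partial>\<pi>))"

definition c_transform :: "('a \<Rightarrow> 'b \<Rightarrow> real) \<Rightarrow> ('a \<Rightarrow> real) \<Rightarrow> 'b \<Rightarrow> real" where
  "c_transform c \<phi> y = (SUP x. \<phi> x - c x y)"

definition dual_fun :: "(real \<Rightarrow> real) \<Rightarrow> (real \<Rightarrow> real) \<Rightarrow> ('a::metric_space \<Rightarrow> 'b::metric_space \<Rightarrow> real)
    \<Rightarrow> 'a measure \<Rightarrow> 'b measure \<Rightarrow> ('a \<Rightarrow> real) \<Rightarrow> real" where
  "dual_fun h0 h1 c \<mu> \<nu> \<phi> =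
     (\<integral>x. - conj_fun h0 (- \<phi> x) \<partial>\<mu>) - (\<integral>y. conj_fun h1 (c_transform c \<phi> y) \<partial>\<nu>)"

definition Phi :: "(real \<Rightarrow> real) \<Rightarrow> (real \<Rightarrow> real) \<Rightarrow> ('a::metric_space \<Rightarrow> 'b::metric_space \<Rightarrow> real)
    \<Rightarrow> 'a measure \<Rightarrow> 'b measure \<Rightarrow> ('a \<Rightarrow> real) set" where
  "Phi h0 h1 c \<mu> \<nu> =
     {\<phi>. continuous_on UNIV \<phi> \<and> ereal (dual_fun h0 h1 c \<mu> \<nu> \<phi>) = UT h0 h1 c \<mu> \<nu>}"

definition tot_var :: "'a::topological_space measure \<Rightarrow> 'a measure \<Rightarrow> 'a set \<Rightarrow> real" where
  "tot_var \<mu>1 \<mu>2 E =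
     (SUP P\<in>{P. finite P \<and> P \<subseteq> sets borel \<and> disjoint P \<and> \<Union>P = E}.
        \<Sum>A\<in>P. \<bar>measure \<mu>1 A - measure \<mu>2 A\<bar>)"

definition supp_diff :: "'a::topological_space measure \<Rightarrow> 'a measure \<Rightarrow> 'a set" where
  "supp_diff \<mu>2 \<mu>1 = {x. \<forall>V. open V \<and> x \<in> V \<longrightarrow> tot_var \<mu>2 \<mu>1 V > 0}"

end

theory Submission
  imports Defs
begin

text \<open>Write F(t) = -h0*(-t), a nondecreasing function, and D(\<mu>, \<phi>) for the dual functional.
  Integrating the Fenchel-Young inequality against the marginals of a plan gives weak duality
  D(\<mu>, \<phi>) \<le> UT(\<mu>, \<nu>) for every continuous \<phi>. The c-transform of max(\<phi>1, \<phi>2) is the maximum,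
  and that of min(\<phi>1, \<phi>2) is at most the minimum, of the c-transforms of \<phi>1 and \<phi>2; since
  h1* is nondecreasing, the \<nu>-terms of D(\<mu>1, min(\<phi>1, \<phi>2)) + D(\<mu>2, max(\<phi>1, \<phi>2)) dominate those
  of D(\<mu>1, \<phi>1) + D(\<mu>2, \<phi>2). The \<mu>-terms differ by the integral of g = F(max(\<phi>1, \<phi>2)) - F(\<phi>2)
  against \<mu>2 - \<mu>1; g is nonnegative and vanishes off U, so this gap is nonnegative. By optimality
  of \<phi>1 and \<phi>2 all these inequalities are equalities, and the gap is zero. If F(\<phi>1 x) > F(\<phi>2 x)
  at a point x of the support of \<mu>2 - \<mu>1, then g > g(x)/2 on an open V \<subseteq> U around x, and a
  Borel set A \<subseteq> V with \<mu>1(A) < \<mu>2(A) would make the gap positive.\<close>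

lemma bdd_above_conj_fun:
  assumes "entropy_fun h"
  shows "bdd_above ((\<lambda>s. r * s - h s) ` {0..})"
proof -
  have h_nonneg: "\<And>s. s \<ge> 0 \<Longrightarrow> h s \<ge> 0" and superlinear: "filterlim (\<lambda>s. h s / s) at_top at_top"
    using assms by (auto simp: entropy_fun_def)
  have "\<forall>\<^sub>F s in at_top. h s / s \<ge> r \<and> s > 0"
    using superlinear by (intro eventually_conj eventually_gt_at_top) (simp add: filterlim_at_top)
  then obtain S where S: "\<And>s. s \<ge> S \<Longrightarrow> h s / s \<ge> r \<and> s > 0"
    by (auto simp: eventually_at_top_linorder)
  have "r * s - h s \<le> \<bar>r\<bar> * \<bar>S\<bar>" if "s \<ge> 0" for s
  proof (cases "s \<ge> S")
    case True
    with S have "r \<le> h s / s" "s > 0" by auto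
    then have "r * s \<le> h s" by (simp add: pos_le_divide_eq)
    then show ?thesis by (smt (verit) zero_le_mult_iff abs_ge_zero)
  next
    case False
    have "r * s \<le> \<bar>r\<bar> * \<bar>S\<bar>"
      using that False by (intro order.trans[OF mult_right_mono mult_left_mono]) auto
    then show ?thesis using h_nonneg[OF that] by linarith
  qed
  then show ?thesis by (intro bdd_aboveI2) auto
qed

lemma conj_fun_ge:
  assumes "entropy_fun h" "s \<ge> 0"
  shows "r * s - h s \<le> conj_fun h r"
  unfolding conj_fun_def using bdd_above_conj_fun[OF assms(1)] assms(2)
  by (intro cSUP_upper) auto

lemma conj_fun_le:
  assumes "\<And>s. s \<ge> 0 \<Longrightarrow> r * s - h s \<le> M"
  shows "conj_fun h r \<le> M"
  unfolding conj_fun_def using assms by (intro cSUP_least) auto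

lemma mono_conj_fun:
  assumes "entropy_fun h"
  shows "mono (conj_fun h)"
proof (rule monoI, rule conj_fun_le)
  fix r r' s :: real assume "r \<le> r'" "s \<ge> 0"
  then have "r * s - h s \<le> r' * s - h s" by (simp add: mult_right_mono)
  also have "\<dots> \<le> conj_fun h r'" using conj_fun_ge[OF assms \<open>s \<ge> 0\<close>] .
  finally show "r * s - h s \<le> conj_fun h r'" .
qed

lemma convex_on_conj_fun:
  assumes "entropy_fun h"
  shows "convex_on UNIV (conj_fun h)"
proof (rule convex_onI[rotated, OF convex_UNIV], rule conj_fun_le)
  fix t x y s :: real assume t: "0 < t" "t < 1" and s: "s \<ge> 0"
  have "((1 - t) *\<^sub>R x + t *\<^sub>R y) * s - h s = (1 - t) * (x * s - h s) + t * (y * s - h s)"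
    by (simp add: algebra_simps)
  also have "\<dots> \<le> (1 - t) * conj_fun h x + t * conj_fun h y"
    using conj_fun_ge[OF assms s, of x] conj_fun_ge[OF assms s, of y] t
    by (intro add_mono mult_left_mono) auto
  finally show "((1 - t) *\<^sub>R x + t *\<^sub>R y) * s - h s \<le> (1 - t) * conj_fun h x + t * conj_fun h y" .
qed

lemma continuous_on_conj_fun:
  assumes "entropy_fun h"
  shows "continuous_on UNIV (conj_fun h)"
  using convex_on_continuous[OF open_UNIV convex_on_conj_fun[OF assms]] .

lemma continuous_on_conj_fun_compose:
  assumes "entropy_fun h" "continuous_on UNIV f"
  shows "continuous_on UNIV (\<lambda>x. conj_fun h (f x))"
  using continuous_on_compose2[OF continuous_on_conj_fun[OF assms(1)] assms(2)] by simp

lemma compact_UNIV_continuous_bounded: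
  fixes f :: "'a::metric_space \<Rightarrow> real"
  assumes "compact (UNIV :: 'a set)" "continuous_on UNIV f"
  obtains B where "\<And>x. \<bar>f x\<bar> \<le> B"
proof -
  have "bounded (range f)"
    by (rule compact_imp_bounded[OF compact_continuous_image[OF assms(2,1)]])
  then show ?thesis using that by (auto simp: bounded_iff)
qed

lemma compact_UNIV_continuous_cost_bounded:
  fixes c :: "'a::metric_space \<Rightarrow> 'b::metric_space \<Rightarrow> real"
  assumes "compact (UNIV :: 'a set)" "compact (UNIV :: 'b set)"
    and "continuous_on UNIV (\<lambda>p. c (fst p) (snd p))"
  obtains C where "\<And>x y. \<bar>c x y\<bar> \<le> C"
proof -
  obtain C where "\<And>p. \<bar>c (fst p) (snd p)\<bar> \<le> C"
    using compact_UNIV_continuous_bounded[OF _ assms(3)] compact_Times[OF assms(1,2)] by auto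
  then show ?thesis using that[of C] by (metis fst_conv snd_conv)
qed

lemma c_transform_ge:
  assumes "\<And>x. \<bar>\<phi> x\<bar> \<le> B" "\<And>x y. \<bar>c x y\<bar> \<le> C"
  shows "\<phi> x - c x y \<le> c_transform c \<phi> y"
proof -
  have "bdd_above (range (\<lambda>x. \<phi> x - c x y))"
    using assms by (intro bdd_aboveI2[where M="B + C"]) (smt (verit))
  then show ?thesis unfolding c_transform_def by (intro cSUP_upper) auto
qed

lemma c_transform_le:
  "(\<And>x. \<phi> x - c x y \<le> M) \<Longrightarrow> c_transform c \<phi> y \<le> M"
  unfolding c_transform_def by (rule cSUP_least) auto

lemma abs_c_transform_le:
  assumes "\<And>x. \<bar>\<phi> x\<bar> \<le> B" "\<And>x y. \<bar>c x y\<bar> \<le> C"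
  shows "\<bar>c_transform c \<phi> y\<bar> \<le> B + C"
proof -
  have "c_transform c \<phi> y \<le> B + C"
    using assms by (intro c_transform_le) (smt (verit))
  moreover have "\<phi> x - c x y \<le> c_transform c \<phi> y" for x
    by (rule c_transform_ge[OF assms])
  then have "- B - C \<le> c_transform c \<phi> y"
    using assms(1)[of undefined] assms(2)[of undefined y] by smt
  ultimately show ?thesis by linarith
qed

lemma c_transform_mono:
  assumes "\<And>x. \<phi> x \<le> \<phi>' x" "\<And>x. \<bar>\<phi>' x\<bar> \<le> B" "\<And>x y. \<bar>c x y\<bar> \<le> C"
  shows "c_transform c \<phi> y \<le> c_transform c \<phi>' y"
proof (rule c_transform_le)
  fix x
  have "\<phi>' x - c x y \<le> c_transform c \<phi>' y" by (rule c_transform_ge[OF assms(2,3)])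
  then show "\<phi> x - c x y \<le> c_transform c \<phi>' y" using assms(1)[of x] by linarith
qed

lemma c_transform_max:
  assumes "\<And>x. \<bar>\<phi>1 x\<bar> \<le> B" "\<And>x. \<bar>\<phi>2 x\<bar> \<le> B" "\<And>x y. \<bar>c x y\<bar> \<le> C"
  shows "c_transform c (\<lambda>x. max (\<phi>1 x) (\<phi>2 x)) y = max (c_transform c \<phi>1 y) (c_transform c \<phi>2 y)"
proof (rule antisym)
  show "c_transform c (\<lambda>x. max (\<phi>1 x) (\<phi>2 x)) y \<le> max (c_transform c \<phi>1 y) (c_transform c \<phi>2 y)"
  proof (rule c_transform_le)
    fix x
    have "\<phi>1 x - c x y \<le> c_transform c \<phi>1 y" "\<phi>2 x - c x y \<le> c_transform c \<phi>2 y"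
      by (rule c_transform_ge[OF assms(1,3)], rule c_transform_ge[OF assms(2,3)])
    then show "max (\<phi>1 x) (\<phi>2 x) - c x y \<le> max (c_transform c \<phi>1 y) (c_transform c \<phi>2 y)"
      by linarith
  qed
  have max_bounded: "\<bar>max (\<phi>1 x) (\<phi>2 x)\<bar> \<le> B" for x
    using assms(1,2)[of x] by (auto simp: abs_le_iff max_def)
  have "c_transform c \<phi>1 y \<le> c_transform c (\<lambda>x. max (\<phi>1 x) (\<phi>2 x)) y"
    "c_transform c \<phi>2 y \<le> c_transform c (\<lambda>x. max (\<phi>1 x) (\<phi>2 x)) y"
    by (rule c_transform_mono[OF _ max_bounded assms(3)], simp)+
  then show "max (c_transform c \<phi>1 y) (c_transform c \<phi>2 y) \<le> c_transform c (\<lambda>x. max (\<phi>1 x) (\<phi>2 x)) y"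
    by simp
qed

lemma continuous_on_c_transform:
  fixes c :: "'a::metric_space \<Rightarrow> 'b::metric_space \<Rightarrow> real"
  assumes "compact (UNIV :: 'a set)" "compact (UNIV :: 'b set)"
    and "continuous_on UNIV (\<lambda>p. c (fst p) (snd p))"
    and B: "\<And>x. \<bar>\<phi> x\<bar> \<le> B" and C: "\<And>x y. \<bar>c x y\<bar> \<le> C"
  shows "continuous_on UNIV (c_transform c \<phi>)"
proof -
  have uc: "uniformly_continuous_on UNIV (\<lambda>p. c (fst p) (snd p))"
    using compact_uniformly_continuous[OF assms(3)] compact_Times[OF assms(1,2)] by simp
  have "uniformly_continuous_on UNIV (c_transform c \<phi>)"
    unfolding uniformly_continuous_on_def
  proof (intro allI impI)
    fix e :: real assume "e > 0"
    then obtain d where "d > 0" and d: "\<And>p p'. dist p' p < d \<Longrightarrow>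
        dist (c (fst p') (snd p')) (c (fst p) (snd p)) < e / 2"
      using uc unfolding uniformly_continuous_on_def by (metis UNIV_I half_gt_zero)
    have close: "c_transform c \<phi> y' \<le> c_transform c \<phi> y + e / 2" if "dist y' y < d" for y y'
    proof (rule c_transform_le)
      fix x
      have "\<bar>c x y' - c x y\<bar> < e / 2"
        using d[of "(x, y')" "(x, y)"] that by (simp add: dist_Pair_Pair dist_real_def)
      moreover have "\<phi> x - c x y \<le> c_transform c \<phi> y" by (rule c_transform_ge[OF B C])
      ultimately show "\<phi> x - c x y' \<le> c_transform c \<phi> y + e / 2" by linarith
    qed
    show "\<exists>d>0. \<forall>y\<in>UNIV. \<forall>y'\<in>UNIV. dist y' y < d \<longrightarrow>
        dist (c_transform c \<phi> y') (c_transform c \<phi> y) < e"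
    proof (intro exI[of _ d] conjI ballI impI \<open>d > 0\<close>)
      fix y y' :: 'b assume "dist y' y < d"
      with close[of y' y] close[of y y'] \<open>e > 0\<close>
      show "dist (c_transform c \<phi> y') (c_transform c \<phi> y) < e"
        by (simp add: dist_commute dist_real_def abs_le_iff)
    qed
  qed
  then show ?thesis by (rule uniformly_continuous_imp_continuous)
qed

lemma borel_measurable_continuous_on_sets_borel:
  assumes "sets M = sets borel" "continuous_on UNIV f"
  shows "f \<in> borel_measurable M"
  using borel_measurable_continuous_onI[OF assms(2)] by (simp add: measurable_cong_sets[OF assms(1) refl])

lemma integrable_continuous_fin_borel:
  fixes f :: "'a::metric_space \<Rightarrow> real"
  assumes "M \<in> fin_borel_measures" "compact (UNIV :: 'a set)" "continuous_on UNIV f"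
  shows "integrable M f"
proof -
  obtain B where "\<And>x. \<bar>f x\<bar> \<le> B" using compact_UNIV_continuous_bounded[OF assms(2,3)] by blast
  moreover have "sets M = sets borel" "finite_measure M" using assms(1) by (auto simp: fin_borel_measures_def)
  ultimately show ?thesis
    using borel_measurable_continuous_on_sets_borel[OF _ assms(3)]
    by (intro finite_measure.integrable_const_bound[where B=B]) auto
qed

lemma density_enn2real_RN_deriv:
  assumes "finite_measure \<mu>" "finite_measure \<pi>" "sets \<pi> = sets \<mu>" "absolutely_continuous \<mu> \<pi>"
  shows "density \<mu> (\<lambda>x. ennreal (enn2real (RN_deriv \<mu> \<pi> x))) = \<pi>"
proof -
  interpret M: finite_measure \<mu> by fact
  interpret P: finite_measure \<pi> by fact
  have "AE x in \<mu>. RN_deriv \<mu> \<pi> x \<noteq> \<infinity>"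
    by (rule M.RN_deriv_finite[OF P.sigma_finite_measure_axioms assms(4,3)])
  then have "density \<mu> (\<lambda>x. ennreal (enn2real (RN_deriv \<mu> \<pi> x))) = density \<mu> (RN_deriv \<mu> \<pi>)"
    by (intro density_cong) (auto simp: less_top)
  also have "\<dots> = \<pi>" by (rule M.density_RN_deriv[OF assms(4,3)])
  finally show ?thesis .
qed

lemma integrable_conj_fun_compose:
  assumes h: "entropy_fun h" and fin: "finite_measure \<mu>"
    and u: "u \<in> borel_measurable \<mu>" "\<And>x. \<bar>u x\<bar> \<le> B"
  shows "integrable \<mu> (\<lambda>x. conj_fun h (u x))"
proof (rule finite_measure.integrable_const_bound[OF fin, where B="\<bar>conj_fun h (-B)\<bar> + \<bar>conj_fun h B\<bar>"])
  have "\<bar>conj_fun h (u x)\<bar> \<le> \<bar>conj_fun h (-B)\<bar> + \<bar>conj_fun h B\<bar>" for x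
  proof -
    have "conj_fun h (-B) \<le> conj_fun h (u x)" "conj_fun h (u x) \<le> conj_fun h B"
      using u(2)[of x] monoD[OF mono_conj_fun[OF h], of "-B" "u x"]
        monoD[OF mono_conj_fun[OF h], of "u x" B] by (auto simp: abs_le_iff)
    then show ?thesis by linarith
  qed
  then show "AE x in \<mu>. norm (conj_fun h (u x)) \<le> \<bar>conj_fun h (-B)\<bar> + \<bar>conj_fun h B\<bar>" by simp
  show "(\<lambda>x. conj_fun h (u x)) \<in> borel_measurable \<mu>"
    by (rule measurable_compose[OF u(1) borel_measurable_continuous_onI[OF continuous_on_conj_fun[OF h]]])
qed

lemma integral_RN_deriv_mult:
  fixes u :: "'a \<Rightarrow> real"
  assumes fin: "finite_measure \<mu>" "finite_measure \<pi>" and sets: "sets \<pi> = sets \<mu>"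
    and ac: "absolutely_continuous \<mu> \<pi>"
    and u: "u \<in> borel_measurable \<mu>" "\<And>x. \<bar>u x\<bar> \<le> B"
  shows "integrable \<mu> (\<lambda>x. enn2real (RN_deriv \<mu> \<pi> x) * u x)"
    and "(\<integral>x. u x \<partial>\<pi>) = (\<integral>x. enn2real (RN_deriv \<mu> \<pi> x) * u x \<partial>\<mu>)"
proof -
  have \<rho>: "(\<lambda>x. enn2real (RN_deriv \<mu> \<pi> x)) \<in> borel_measurable \<mu>" by measurable
  note density = density_enn2real_RN_deriv[OF fin sets ac]
  have "integrable \<pi> u"
    using u by (intro finite_measure.integrable_const_bound[OF fin(2)]) (auto simp: measurable_cong_sets[OF sets refl])
  then show "integrable \<mu> (\<lambda>x. enn2real (RN_deriv \<mu> \<pi> x) * u x)"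
    using integrable_density[OF u(1) \<rho>] density by simp
  show "(\<integral>x. u x \<partial>\<pi>) = (\<integral>x. enn2real (RN_deriv \<mu> \<pi> x) * u x \<partial>\<mu>)"
    using integral_density[OF u(1) \<rho>] density by simp
qed

text \<open>The Fenchel-Young inequality h*(-u) + h(\<rho>) \<ge> -u \<rho>, integrated against \<mu>
  with \<rho> = d\<pi>/d\<mu>.\<close>
lemma integral_neg_conj_fun_le_int_energy:
  fixes u :: "'a \<Rightarrow> real"
  assumes h: "entropy_fun h" and fin: "finite_measure \<mu>" "finite_measure \<pi>" and sets: "sets \<pi> = sets \<mu>"
    and energy: "int_energy h \<mu> \<pi> < top"
    and u: "u \<in> borel_measurable \<mu>" "\<And>x. \<bar>u x\<bar> \<le> B"
  shows "(\<integral>x. - conj_fun h (- u x) \<partial>\<mu>) \<le> enn2real (int_energy h \<mu> \<pi>) + (\<integral>x. u x \<partial>\<pi>)"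
proof -
  define \<rho> where "\<rho> x = enn2real (RN_deriv \<mu> \<pi> x)" for x
  define K where "K x = - conj_fun h (- u x)" for x
  have ac: "absolutely_continuous \<mu> \<pi>" using energy by (auto simp: int_energy_def split: if_splits)
  then have energy_eq: "int_energy h \<mu> \<pi> = (\<integral>\<^sup>+x. ennreal (h (\<rho> x)) \<partial>\<mu>)"
    by (simp add: int_energy_def \<rho>_def)
  have \<rho>u_int: "integrable \<mu> (\<lambda>x. \<rho> x * u x)" and int_\<pi>: "(\<integral>x. u x \<partial>\<pi>) = (\<integral>x. \<rho> x * u x \<partial>\<mu>)"
    unfolding \<rho>_def by (rule integral_RN_deriv_mult[OF fin sets ac u])+
  have K_int: "integrable \<mu> K"
    unfolding K_def using u(2)
    by (intro integrable_minus integrable_conj_fun_compose[OF h fin(1) borel_measurable_uminus[OF u(1)]]) simp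
  define L where "L x = max 0 (K x - \<rho> x * u x)" for x
  have L_int: "integrable \<mu> L"
    unfolding L_def
    by (rule Bochner_Integration.integrable_max[OF integrable_zero
          Bochner_Integration.integrable_diff[OF K_int \<rho>u_int]])
  have fenchel_young: "K x - \<rho> x * u x \<le> h (\<rho> x)" for x
    using conj_fun_ge[OF h, of "\<rho> x" "- u x"] unfolding K_def \<rho>_def by (simp add: algebra_simps)
  have "(\<integral>x. K x \<partial>\<mu>) - (\<integral>x. u x \<partial>\<pi>) = (\<integral>x. K x - \<rho> x * u x \<partial>\<mu>)"
    using int_\<pi> K_int \<rho>u_int by simp
  also have "\<dots> \<le> (\<integral>x. L x \<partial>\<mu>)"
    using K_int \<rho>u_int L_int by (intro integral_mono) (auto simp: L_def)
  also have "\<dots> = enn2real (\<integral>\<^sup>+x. ennreal (L x) \<partial>\<mu>)"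
    by (rule integral_eq_nn_integral[OF borel_measurable_integrable[OF L_int]]) (simp add: L_def)
  also have "\<dots> \<le> enn2real (int_energy h \<mu> \<pi>)"
  proof (rule enn2real_mono[OF _ energy])
    have "0 \<le> h (\<rho> x)" for x using h by (simp add: entropy_fun_def \<rho>_def)
    then show "(\<integral>\<^sup>+x. ennreal (L x) \<partial>\<mu>) \<le> int_energy h \<mu> \<pi>"
      unfolding energy_eq L_def using fenchel_young by (intro nn_integral_mono ennreal_leI) simp
  qed
  finally show ?thesis unfolding K_def by simp
qed

lemma fin_borel_measures_distr:
  assumes "\<pi> \<in> fin_borel_measures" "continuous_on UNIV f"
  shows "distr \<pi> borel f \<in> fin_borel_measures"
proof -
  have "sets \<pi> = sets borel" "finite_measure \<pi>" using assms(1) by (auto simp: fin_borel_measures_def)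
  then show ?thesis
    using borel_measurable_continuous_on_sets_borel[OF _ assms(2)]
    by (auto simp: fin_borel_measures_def intro: finite_measure.finite_measure_distr)
qed

lemma integral_marginals_le_cost:
  fixes c :: "'a::metric_space \<Rightarrow> 'b::metric_space \<Rightarrow> real"
  assumes compact: "compact (UNIV :: ('a \<times> 'b) set)" and \<pi>: "\<pi> \<in> fin_borel_measures"
    and c: "continuous_on UNIV (\<lambda>p. c (fst p) (snd p))"
    and \<phi>: "continuous_on UNIV \<phi>" and \<psi>: "continuous_on UNIV \<psi>"
    and le: "\<And>x y. \<phi> x - c x y \<le> \<psi> y"
  shows "(\<integral>x. \<phi> x \<partial>distr \<pi> borel fst) - (\<integral>y. \<psi> y \<partial>distr \<pi> borel snd) \<le> (\<integral>p. c (fst p) (snd p) \<partial>\<pi>)"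
proof -
  have sets: "sets \<pi> = sets borel" using \<pi> by (simp add: fin_borel_measures_def)
  have fst: "fst \<in> measurable \<pi> borel" and snd: "snd \<in> measurable \<pi> borel"
    by (simp_all add: measurable_cong_sets[OF sets refl] borel_measurable_continuous_onI
        continuous_on_fst continuous_on_snd)
  have \<phi>_fst: "integrable \<pi> (\<lambda>p. \<phi> (fst p))"
    by (intro integrable_continuous_fin_borel[OF \<pi> compact] continuous_on_compose2[OF \<phi>]
        continuous_on_fst continuous_on_id) auto
  have \<psi>_snd: "integrable \<pi> (\<lambda>p. \<psi> (snd p))"
    by (intro integrable_continuous_fin_borel[OF \<pi> compact] continuous_on_compose2[OF \<psi>]
        continuous_on_snd continuous_on_id) auto
  have "(\<integral>x. \<phi> x \<partial>distr \<pi> borel fst) - (\<integral>y. \<psi> y \<partial>distr \<pi> borel snd)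
      = (\<integral>p. \<phi> (fst p) \<partial>\<pi>) - (\<integral>p. \<psi> (snd p) \<partial>\<pi>)"
    using \<phi> \<psi> by (simp add: integral_distr[OF fst] integral_distr[OF snd] borel_measurable_continuous_onI)
  also have "\<dots> = (\<integral>p. \<phi> (fst p) - \<psi> (snd p) \<partial>\<pi>)"
    by (rule Bochner_Integration.integral_diff[symmetric, OF \<phi>_fst \<psi>_snd])
  also have "\<dots> \<le> (\<integral>p. c (fst p) (snd p) \<partial>\<pi>)"
    using le by (intro integral_mono integrable_continuous_fin_borel[OF \<pi> compact] c \<phi>_fst \<psi>_snd
        Bochner_Integration.integrable_diff) (auto simp: algebra_simps)
  finally show ?thesis .
qed

lemma dual_fun_le_primal_cost:
  fixes c :: "'a::metric_space \<Rightarrow> 'b::metric_space \<Rightarrow> real"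
  assumes cA: "compact (UNIV :: 'a set)" and cB: "compact (UNIV :: 'b set)"
    and c: "continuous_on UNIV (\<lambda>p. c (fst p) (snd p))"
    and h0: "entropy_fun h0" and h1: "entropy_fun h1"
    and \<mu>: "\<mu> \<in> fin_borel_measures" and \<nu>: "\<nu> \<in> fin_borel_measures" and \<pi>: "\<pi> \<in> fin_borel_measures"
    and \<phi>: "continuous_on UNIV \<phi>"
  shows "ereal (dual_fun h0 h1 c \<mu> \<nu> \<phi>)
    \<le> enn2ereal (int_energy h0 \<mu> (distr \<pi> borel fst)) + enn2ereal (int_energy h1 \<nu> (distr \<pi> borel snd))
      + ereal (\<integral>p. c (fst p) (snd p) \<partial>\<pi>)"
proof -
  define \<pi>0 \<pi>1 where "\<pi>0 = distr \<pi> borel fst" and "\<pi>1 = distr \<pi> borel snd"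
  consider (infinite) "int_energy h0 \<mu> \<pi>0 = top \<or> int_energy h1 \<nu> \<pi>1 = top"
    | (finite) "int_energy h0 \<mu> \<pi>0 < top" "int_energy h1 \<nu> \<pi>1 < top"
    using less_top by blast
  then show ?thesis
  proof cases
    case infinite
    then show ?thesis unfolding \<pi>0_def \<pi>1_def by auto
  next
    case finite
    obtain B where B: "\<And>x. \<bar>\<phi> x\<bar> \<le> B" using compact_UNIV_continuous_bounded[OF cA \<phi>] by blast
    obtain C where C: "\<And>x y. \<bar>c x y\<bar> \<le> C" using compact_UNIV_continuous_cost_bounded[OF cA cB c] by blast
    define \<psi> where "\<psi> = c_transform c \<phi>"
    have \<psi>_cont: "continuous_on UNIV \<psi>"
      unfolding \<psi>_def by (rule continuous_on_c_transform[OF cA cB c B C])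
    have \<psi>_bounded: "\<bar>- \<psi> y\<bar> \<le> B + C" for y
      unfolding \<psi>_def using abs_c_transform_le[OF B C] by simp
    have \<pi>0: "\<pi>0 \<in> fin_borel_measures" and \<pi>1: "\<pi>1 \<in> fin_borel_measures"
      unfolding \<pi>0_def \<pi>1_def
      by (intro fin_borel_measures_distr[OF \<pi>] continuous_on_fst continuous_on_snd continuous_on_id)+
    have \<mu>_part: "(\<integral>x. - conj_fun h0 (- \<phi> x) \<partial>\<mu>) \<le> enn2real (int_energy h0 \<mu> \<pi>0) + (\<integral>x. \<phi> x \<partial>\<pi>0)"
      using \<mu> \<pi>0 by (intro integral_neg_conj_fun_le_int_energy[OF h0 _ _ _ finite(1) _ B]
          borel_measurable_continuous_on_sets_borel \<phi>) (auto simp: fin_borel_measures_def)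
    have \<nu>_part: "(\<integral>y. - conj_fun h1 (- (- \<psi> y)) \<partial>\<nu>) \<le> enn2real (int_energy h1 \<nu> \<pi>1) + (\<integral>y. - \<psi> y \<partial>\<pi>1)"
      using \<nu> \<pi>1 by (intro integral_neg_conj_fun_le_int_energy[OF h1 _ _ _ finite(2) _ \<psi>_bounded]
          borel_measurable_continuous_on_sets_borel continuous_on_minus \<psi>_cont) (auto simp: fin_borel_measures_def)
    have "(\<integral>x. \<phi> x \<partial>\<pi>0) - (\<integral>y. \<psi> y \<partial>\<pi>1) \<le> (\<integral>p. c (fst p) (snd p) \<partial>\<pi>)"
      unfolding \<pi>0_def \<pi>1_def using compact_Times[OF cA cB] c_transform_ge[OF B C]
      by (intro integral_marginals_le_cost[OF _ \<pi> c \<phi> \<psi>_cont]) (simp_all add: \<psi>_def)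
    then have "dual_fun h0 h1 c \<mu> \<nu> \<phi>
        \<le> enn2real (int_energy h0 \<mu> \<pi>0) + enn2real (int_energy h1 \<nu> \<pi>1) + (\<integral>p. c (fst p) (snd p) \<partial>\<pi>)"
      using \<mu>_part \<nu>_part unfolding dual_fun_def \<psi>_def by simp
    moreover have "enn2ereal E = ereal (enn2real E)" if "E < top" for E :: ennreal
      using that by (cases E rule: ennreal_cases) auto
    ultimately show ?thesis using finite unfolding \<pi>0_def \<pi>1_def by simp
  qed
qed

lemma dual_fun_le_UT:
  fixes c :: "'a::metric_space \<Rightarrow> 'b::metric_space \<Rightarrow> real"
  assumes "compact (UNIV :: 'a set)" "compact (UNIV :: 'b set)"
    and "continuous_on UNIV (\<lambda>p. c (fst p) (snd p))"
    and "entropy_fun h0" "entropy_fun h1"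
    and "\<mu> \<in> fin_borel_measures" "\<nu> \<in> fin_borel_measures"
    and "continuous_on UNIV \<phi>"
  shows "ereal (dual_fun h0 h1 c \<mu> \<nu> \<phi>) \<le> UT h0 h1 c \<mu> \<nu>"
  unfolding UT_def using assms by (intro INF_greatest dual_fun_le_primal_cost)

lemma integrable_conj_c_transform:
  fixes c :: "'a::metric_space \<Rightarrow> 'b::metric_space \<Rightarrow> real"
  assumes cA: "compact (UNIV :: 'a set)" and cB: "compact (UNIV :: 'b set)"
    and c: "continuous_on UNIV (\<lambda>p. c (fst p) (snd p))"
    and h: "entropy_fun h" and \<nu>: "\<nu> \<in> fin_borel_measures" and \<phi>: "continuous_on UNIV \<phi>"
  shows "integrable \<nu> (\<lambda>y. conj_fun h (c_transform c \<phi> y))"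
proof -
  obtain B where B: "\<And>x. \<bar>\<phi> x\<bar> \<le> B" using compact_UNIV_continuous_bounded[OF cA \<phi>] by blast
  obtain C where C: "\<And>x y. \<bar>c x y\<bar> \<le> C" using compact_UNIV_continuous_cost_bounded[OF cA cB c] by blast
  show ?thesis
    by (intro integrable_continuous_fin_borel[OF \<nu> cB] continuous_on_conj_fun_compose[OF h]
        continuous_on_c_transform[OF cA cB c B C])
qed

lemma conj_fun_min_plus_max:
  "conj_fun h (min a b) + conj_fun h (max a b) = conj_fun h a + conj_fun h b"
  by (cases "a \<le> b") (auto simp: min_def max_def)

lemma integral_conj_c_transform_min_max_le:
  fixes c :: "'a::metric_space \<Rightarrow> 'b::metric_space \<Rightarrow> real"
  assumes cA: "compact (UNIV :: 'a set)" and cB: "compact (UNIV :: 'b set)"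
    and c: "continuous_on UNIV (\<lambda>p. c (fst p) (snd p))"
    and h: "entropy_fun h" and \<nu>: "\<nu> \<in> fin_borel_measures"
    and \<phi>1: "continuous_on UNIV \<phi>1" and \<phi>2: "continuous_on UNIV \<phi>2"
  shows "(\<integral>y. conj_fun h (c_transform c (\<lambda>x. min (\<phi>1 x) (\<phi>2 x)) y) \<partial>\<nu>)
         + (\<integral>y. conj_fun h (c_transform c (\<lambda>x. max (\<phi>1 x) (\<phi>2 x)) y) \<partial>\<nu>)
       \<le> (\<integral>y. conj_fun h (c_transform c \<phi>1 y) \<partial>\<nu>) + (\<integral>y. conj_fun h (c_transform c \<phi>2 y) \<partial>\<nu>)"
proof -
  obtain B1 where B1: "\<And>x. \<bar>\<phi>1 x\<bar> \<le> B1" using compact_UNIV_continuous_bounded[OF cA \<phi>1] by blast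
  obtain B2 where B2: "\<And>x. \<bar>\<phi>2 x\<bar> \<le> B2" using compact_UNIV_continuous_bounded[OF cA \<phi>2] by blast
  obtain C where C: "\<And>x y. \<bar>c x y\<bar> \<le> C" using compact_UNIV_continuous_cost_bounded[OF cA cB c] by blast
  have \<phi>1_bounded: "\<bar>\<phi>1 x\<bar> \<le> B1 + B2" and \<phi>2_bounded: "\<bar>\<phi>2 x\<bar> \<le> B1 + B2" for x
    using B1[of x] B2[of x] abs_ge_zero[of "\<phi>1 x"] abs_ge_zero[of "\<phi>2 x"] by linarith+
  let ?ct = "\<lambda>f y. conj_fun h (c_transform c f y)"
  have pointwise: "?ct (\<lambda>x. min (\<phi>1 x) (\<phi>2 x)) y + ?ct (\<lambda>x. max (\<phi>1 x) (\<phi>2 x)) y \<le> ?ct \<phi>1 y + ?ct \<phi>2 y"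
    for y
  proof -
    have "c_transform c (\<lambda>x. min (\<phi>1 x) (\<phi>2 x)) y \<le> c_transform c \<phi>1 y"
      "c_transform c (\<lambda>x. min (\<phi>1 x) (\<phi>2 x)) y \<le> c_transform c \<phi>2 y"
      by (rule c_transform_mono[OF _ \<phi>1_bounded C], simp, rule c_transform_mono[OF _ \<phi>2_bounded C], simp)
    then have "?ct (\<lambda>x. min (\<phi>1 x) (\<phi>2 x)) y \<le> conj_fun h (min (c_transform c \<phi>1 y) (c_transform c \<phi>2 y))"
      by (intro monoD[OF mono_conj_fun[OF h]]) simp
    then show ?thesis
      using conj_fun_min_plus_max[of h "c_transform c \<phi>1 y" "c_transform c \<phi>2 y"]
      by (simp add: c_transform_max[OF \<phi>1_bounded \<phi>2_bounded C])
  qed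
  have integrable: "integrable \<nu> (?ct f)" if "continuous_on UNIV f" for f
    by (rule integrable_conj_c_transform[OF cA cB c h \<nu> that])
  have min_max_cont: "continuous_on UNIV (\<lambda>x. min (\<phi>1 x) (\<phi>2 x))" "continuous_on UNIV (\<lambda>x. max (\<phi>1 x) (\<phi>2 x))"
    by (intro continuous_intros \<phi>1 \<phi>2)+
  show ?thesis
    using integral_mono[OF Bochner_Integration.integrable_add Bochner_Integration.integrable_add pointwise,
        OF integrable integrable integrable integrable, OF min_max_cont \<phi>1 \<phi>2]
    by (simp add: integrable min_max_cont \<phi>1 \<phi>2)
qed

lemma dual_fun_min_max_ge:
  fixes c :: "'a::metric_space \<Rightarrow> 'b::metric_space \<Rightarrow> real"
  assumes cA: "compact (UNIV :: 'a set)" and cB: "compact (UNIV :: 'b set)"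
    and c: "continuous_on UNIV (\<lambda>p. c (fst p) (snd p))"
    and h0: "entropy_fun h0" and h1: "entropy_fun h1"
    and \<mu>1: "\<mu>1 \<in> fin_borel_measures" and \<mu>2: "\<mu>2 \<in> fin_borel_measures" and \<nu>: "\<nu> \<in> fin_borel_measures"
    and \<phi>1: "continuous_on UNIV \<phi>1" and \<phi>2: "continuous_on UNIV \<phi>2"
  defines "g \<equiv> \<lambda>x. conj_fun h0 (- \<phi>2 x) - conj_fun h0 (- max (\<phi>1 x) (\<phi>2 x))"
  shows "dual_fun h0 h1 c \<mu>1 \<nu> \<phi>1 + dual_fun h0 h1 c \<mu>2 \<nu> \<phi>2 + ((\<integral>x. g x \<partial>\<mu>2) - (\<integral>x. g x \<partial>\<mu>1))
    \<le> dual_fun h0 h1 c \<mu>1 \<nu> (\<lambda>x. min (\<phi>1 x) (\<phi>2 x)) + dual_fun h0 h1 c \<mu>2 \<nu> (\<lambda>x. max (\<phi>1 x) (\<phi>2 x))"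
proof -
  have integrable: "integrable \<mu> (\<lambda>x. conj_fun h0 (- f x))"
    if "\<mu> \<in> fin_borel_measures" "continuous_on UNIV f" for \<mu> :: "'a measure" and f
    by (intro integrable_continuous_fin_borel[OF that(1) cA] continuous_on_conj_fun_compose[OF h0]
        continuous_intros that(2))
  have max_cont: "continuous_on UNIV (\<lambda>x. max (\<phi>1 x) (\<phi>2 x))" by (intro continuous_intros \<phi>1 \<phi>2)
  have g_int: "integrable \<mu> g" if "\<mu> \<in> fin_borel_measures" for \<mu> :: "'a measure"
    unfolding g_def by (intro Bochner_Integration.integrable_diff integrable[OF that] \<phi>2 max_cont)
  have "conj_fun h0 (- min (\<phi>1 x) (\<phi>2 x)) = conj_fun h0 (- \<phi>1 x) + g x" for x
    unfolding g_def by (cases "\<phi>1 x \<le> \<phi>2 x") (auto simp: min_def max_def)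
  then have \<mu>1_part: "(\<integral>x. - conj_fun h0 (- min (\<phi>1 x) (\<phi>2 x)) \<partial>\<mu>1)
      = (\<integral>x. - conj_fun h0 (- \<phi>1 x) \<partial>\<mu>1) - (\<integral>x. g x \<partial>\<mu>1)"
    using integrable[OF \<mu>1 \<phi>1] g_int[OF \<mu>1] by simp
  have "conj_fun h0 (- max (\<phi>1 x) (\<phi>2 x)) = conj_fun h0 (- \<phi>2 x) - g x" for x
    unfolding g_def by simp
  then have \<mu>2_part: "(\<integral>x. - conj_fun h0 (- max (\<phi>1 x) (\<phi>2 x)) \<partial>\<mu>2)
      = (\<integral>x. - conj_fun h0 (- \<phi>2 x) \<partial>\<mu>2) + (\<integral>x. g x \<partial>\<mu>2)"
    using integrable[OF \<mu>2 \<phi>2] g_int[OF \<mu>2] by simp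
  show ?thesis
    using \<mu>1_part \<mu>2_part integral_conj_c_transform_min_max_le[OF cA cB c h1 \<nu> \<phi>1 \<phi>2]
    unfolding dual_fun_def by linarith
qed

lemma integral_le_of_emeasure_le_on:
  fixes \<mu>1 \<mu>2 :: "'a::topological_space measure" and k :: "'a \<Rightarrow> real"
  assumes \<mu>1: "\<mu>1 \<in> fin_borel_measures" and \<mu>2: "\<mu>2 \<in> fin_borel_measures"
    and U: "U \<in> sets borel"
    and le_on_U: "\<forall>A\<in>sets borel. A \<subseteq> U \<longrightarrow> emeasure \<mu>1 A \<le> emeasure \<mu>2 A"
    and k: "k \<in> borel_measurable borel" "\<And>x. 0 \<le> k x" "\<And>x. k x \<le> K"
    and k_outside: "\<And>x. x \<notin> U \<Longrightarrow> k x = 0"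
  shows "(\<integral>x. k x \<partial>\<mu>1) \<le> (\<integral>x. k x \<partial>\<mu>2)"
proof -
  have nn_integral_eq: "(\<integral>\<^sup>+x. ennreal (k x) \<partial>density \<mu> (indicator U)) = ennreal (\<integral>x. k x \<partial>\<mu>)"
    if "\<mu> \<in> fin_borel_measures" for \<mu>
  proof -
    have sets: "sets \<mu> = sets borel" and fin: "finite_measure \<mu>"
      using that by (auto simp: fin_borel_measures_def)
    have k_meas: "k \<in> borel_measurable \<mu>" using k(1) by (simp add: measurable_cong_sets[OF sets refl])
    have "indicator U x * ennreal (k x) = ennreal (k x)" for x
      using k_outside[of x] by (cases "x \<in> U") auto
    then have "(\<integral>\<^sup>+x. ennreal (k x) \<partial>density \<mu> (indicator U)) = (\<integral>\<^sup>+x. ennreal (k x) \<partial>\<mu>)"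
      using U k_meas sets by (subst nn_integral_density) auto
    also have "\<dots> = ennreal (\<integral>x. k x \<partial>\<mu>)"
      using k k_meas by (intro nn_integral_eq_integral finite_measure.integrable_const_bound[OF fin, where B=K])
        (auto intro: order.trans[OF _ k(3)])
    finally show ?thesis .
  qed
  have sets: "sets (density \<mu>1 (indicator U)) = sets (density \<mu>2 (indicator U))"
    using \<mu>1 \<mu>2 by (simp add: fin_borel_measures_def)
  have "density \<mu>1 (indicator U) \<le> density \<mu>2 (indicator U)"
  proof -
    have "emeasure (density \<mu>1 (indicator U)) X \<le> emeasure (density \<mu>2 (indicator U)) X" for X
      using \<mu>1 \<mu>2 U le_on_U
      by (cases "X \<in> sets borel") (auto simp: emeasure_restricted emeasure_notin_sets fin_borel_measures_def)
    then show ?thesis using sets sets_eq_imp_space_eq[OF sets] by (auto simp: le_measure_iff le_fun_def)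
  qed
  then have "ennreal (\<integral>x. k x \<partial>\<mu>1) \<le> ennreal (\<integral>x. k x \<partial>\<mu>2)"
    using nn_integral_mono_measure[OF sets] nn_integral_eq[OF \<mu>1] nn_integral_eq[OF \<mu>2] by metis
  moreover have "0 \<le> (\<integral>x. k x \<partial>\<mu>2)" using k(2) by simp
  ultimately show ?thesis by simp
qed

lemma supp_diff_obtains_set:
  assumes "x \<in> supp_diff \<mu>2 \<mu>1" "open V" "x \<in> V"
  obtains A where "A \<in> sets borel" "A \<subseteq> V" "measure \<mu>2 A \<noteq> measure \<mu>1 A"
proof -
  have "\<exists>A. A \<in> sets borel \<and> A \<subseteq> V \<and> measure \<mu>2 A \<noteq> measure \<mu>1 A"
  proof (rule ccontr)
    assume no_set: "\<nexists>A. A \<in> sets borel \<and> A \<subseteq> V \<and> measure \<mu>2 A \<noteq> measure \<mu>1 A"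
    define Ps where "Ps = {P. finite P \<and> P \<subseteq> sets borel \<and> disjoint P \<and> \<Union>P = V}"
    have "(\<Sum>A\<in>P. \<bar>measure \<mu>2 A - measure \<mu>1 A\<bar>) = 0" if "P \<in> Ps" for P
      using that no_set by (intro sum.neutral) (auto simp: Ps_def)
    moreover have "{V} \<in> Ps" unfolding Ps_def using assms(2) by (auto simp: disjoint_def)
    ultimately have "(\<lambda>P. \<Sum>A\<in>P. \<bar>measure \<mu>2 A - measure \<mu>1 A\<bar>) ` Ps = {0}" by force
    then have "tot_var \<mu>2 \<mu>1 V = 0" unfolding tot_var_def Ps_def[symmetric] by simp
    then show False using assms unfolding supp_diff_def by auto
  qed
  then show ?thesis using that by blast
qed

lemma supp_diff_obtains_measure_less:
  assumes \<mu>1: "\<mu>1 \<in> fin_borel_measures" and \<mu>2: "\<mu>2 \<in> fin_borel_measures"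
    and le_on_U: "\<forall>A\<in>sets borel. A \<subseteq> U \<longrightarrow> emeasure \<mu>1 A \<le> emeasure \<mu>2 A"
    and x: "x \<in> supp_diff \<mu>2 \<mu>1" and V: "open V" "x \<in> V" "V \<subseteq> U"
  obtains A where "A \<in> sets borel" "A \<subseteq> V" "measure \<mu>1 A < measure \<mu>2 A"
proof -
  obtain A where A: "A \<in> sets borel" "A \<subseteq> V" "measure \<mu>2 A \<noteq> measure \<mu>1 A"
    using supp_diff_obtains_set[OF x V(1,2)] .
  have "emeasure \<mu>1 A \<le> emeasure \<mu>2 A" using le_on_U A V(3) by blast
  then have "measure \<mu>1 A \<le> measure \<mu>2 A"
    using \<mu>1 \<mu>2 by (simp add: fin_borel_measures_def finite_measure.emeasure_eq_measure)
  then show ?thesis using that A by simp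
qed

lemma integral_less_at_supp_diff:
  fixes g :: "'a::topological_space \<Rightarrow> real"
  assumes \<mu>1: "\<mu>1 \<in> fin_borel_measures" and \<mu>2: "\<mu>2 \<in> fin_borel_measures"
    and U: "U \<in> sets borel"
    and le_on_U: "\<forall>A\<in>sets borel. A \<subseteq> U \<longrightarrow> emeasure \<mu>1 A \<le> emeasure \<mu>2 A"
    and g: "continuous_on UNIV g" "\<And>x. 0 \<le> g x" "\<And>x. g x \<le> K"
    and g_outside: "\<And>x. x \<notin> U \<Longrightarrow> g x = 0"
    and x: "x \<in> supp_diff \<mu>2 \<mu>1" "0 < g x"
  shows "(\<integral>z. g z \<partial>\<mu>1) < (\<integral>z. g z \<partial>\<mu>2)"
proof -
  define \<delta> where "\<delta> = g x / 2"
  define V where "V = {z. \<delta> < g z}"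
  have "\<delta> > 0" using x(2) by (simp add: \<delta>_def)
  have "open V" unfolding V_def by (intro open_Collect_less continuous_on_const g(1))
  moreover have "x \<in> V" using x(2) by (simp add: V_def \<delta>_def)
  moreover have V_U: "V \<subseteq> U" using g_outside \<open>\<delta> > 0\<close> by (force simp: V_def)
  ultimately obtain A where A: "A \<in> sets borel" "A \<subseteq> V" and less: "measure \<mu>1 A < measure \<mu>2 A"
    using supp_diff_obtains_measure_less[OF \<mu>1 \<mu>2 le_on_U x(1)] by blast
  define k where "k z = g z - \<delta> * indicator A z" for z
  have "(\<integral>z. k z \<partial>\<mu>1) \<le> (\<integral>z. k z \<partial>\<mu>2)"
  proof (rule integral_le_of_emeasure_le_on[OF \<mu>1 \<mu>2 U le_on_U])
    show "k \<in> borel_measurable borel"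
      unfolding k_def using g(1) A(1) by (intro borel_measurable_continuous_onI borel_measurable_diff
          borel_measurable_times borel_measurable_const borel_measurable_indicator)
    show "0 \<le> k z" for z using A(2) g(2)[of z] by (auto simp: k_def V_def indicator_def)
    show "k z \<le> K" for z using g(3)[of z] \<open>\<delta> > 0\<close> by (simp add: k_def indicator_def)
    show "k z = 0" if "z \<notin> U" for z
      using that g_outside[OF that] A(2) V_U by (auto simp: k_def split: split_indicator)
  qed
  moreover have "(\<integral>z. k z \<partial>\<mu>) = (\<integral>z. g z \<partial>\<mu>) - \<delta> * measure \<mu> A"
    if "\<mu> \<in> fin_borel_measures" for \<mu>
  proof -
    have fin: "finite_measure \<mu>" "sets \<mu> = sets borel" using that by (auto simp: fin_borel_measures_def)
    have "integrable \<mu> g"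
      using g fin borel_measurable_continuous_on_sets_borel[OF _ g(1)]
      by (intro finite_measure.integrable_const_bound[where B=K]) auto
    moreover have "integrable \<mu> (indicator A :: 'a \<Rightarrow> real)"
      using A(1) fin by (intro integrable_real_indicator) (auto simp: finite_measure.emeasure_finite less_top[symmetric])
    ultimately show ?thesis
      using A(1) fin by (simp add: k_def finite_measure.emeasure_finite)
  qed
  ultimately show ?thesis
    using \<mu>1 \<mu>2 \<open>\<delta> > 0\<close> less by (smt (verit) mult_strict_left_mono)
qed

lemma min_max_in_Phi_if_gap_nonneg:
  fixes c :: "'a::metric_space \<Rightarrow> 'b::metric_space \<Rightarrow> real"
  assumes cA: "compact (UNIV :: 'a set)" and cB: "compact (UNIV :: 'b set)"
    and c: "continuous_on UNIV (\<lambda>p. c (fst p) (snd p))"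
    and h0: "entropy_fun h0" and h1: "entropy_fun h1"
    and \<mu>1: "\<mu>1 \<in> fin_borel_measures" and \<mu>2: "\<mu>2 \<in> fin_borel_measures" and \<nu>: "\<nu> \<in> fin_borel_measures"
    and \<phi>1: "\<phi>1 \<in> Phi h0 h1 c \<mu>1 \<nu>" and \<phi>2: "\<phi>2 \<in> Phi h0 h1 c \<mu>2 \<nu>"
  defines "g \<equiv> \<lambda>x. conj_fun h0 (- \<phi>2 x) - conj_fun h0 (- max (\<phi>1 x) (\<phi>2 x))"
  assumes gap: "(\<integral>x. g x \<partial>\<mu>1) \<le> (\<integral>x. g x \<partial>\<mu>2)"
  shows "(\<lambda>x. min (\<phi>1 x) (\<phi>2 x)) \<in> Phi h0 h1 c \<mu>1 \<nu> \<and> (\<lambda>x. max (\<phi>1 x) (\<phi>2 x)) \<in> Phi h0 h1 c \<mu>2 \<nu>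
    \<and> (\<integral>x. g x \<partial>\<mu>1) = (\<integral>x. g x \<partial>\<mu>2)"
proof -
  have \<phi>1_cont: "continuous_on UNIV \<phi>1" and opt1: "ereal (dual_fun h0 h1 c \<mu>1 \<nu> \<phi>1) = UT h0 h1 c \<mu>1 \<nu>"
    and \<phi>2_cont: "continuous_on UNIV \<phi>2" and opt2: "ereal (dual_fun h0 h1 c \<mu>2 \<nu> \<phi>2) = UT h0 h1 c \<mu>2 \<nu>"
    using \<phi>1 \<phi>2 by (auto simp: Phi_def)
  have min_max: "continuous_on UNIV (\<lambda>x. min (\<phi>1 x) (\<phi>2 x))" "continuous_on UNIV (\<lambda>x. max (\<phi>1 x) (\<phi>2 x))"
    by (intro continuous_intros \<phi>1_cont \<phi>2_cont)+
  have "dual_fun h0 h1 c \<mu>1 \<nu> (\<lambda>x. min (\<phi>1 x) (\<phi>2 x)) \<le> dual_fun h0 h1 c \<mu>1 \<nu> \<phi>1"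
    "dual_fun h0 h1 c \<mu>2 \<nu> (\<lambda>x. max (\<phi>1 x) (\<phi>2 x)) \<le> dual_fun h0 h1 c \<mu>2 \<nu> \<phi>2"
    using dual_fun_le_UT[OF cA cB c h0 h1 \<mu>1 \<nu> min_max(1)] dual_fun_le_UT[OF cA cB c h0 h1 \<mu>2 \<nu> min_max(2)]
    unfolding opt1[symmetric] opt2[symmetric] by simp_all
  moreover note dual_fun_min_max_ge[OF cA cB c h0 h1 \<mu>1 \<mu>2 \<nu> \<phi>1_cont \<phi>2_cont]
  ultimately have "dual_fun h0 h1 c \<mu>1 \<nu> (\<lambda>x. min (\<phi>1 x) (\<phi>2 x)) = dual_fun h0 h1 c \<mu>1 \<nu> \<phi>1"
    "dual_fun h0 h1 c \<mu>2 \<nu> (\<lambda>x. max (\<phi>1 x) (\<phi>2 x)) = dual_fun h0 h1 c \<mu>2 \<nu> \<phi>2"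
    "(\<integral>x. g x \<partial>\<mu>1) = (\<integral>x. g x \<partial>\<mu>2)"
    using gap unfolding g_def by linarith+
  then show ?thesis using opt1 opt2 min_max by (simp add: Phi_def)
qed

theorem theorem3p19:
  fixes c :: "'a::metric_space \<Rightarrow> 'b::metric_space \<Rightarrow> real"
    and h0 h1 :: "real \<Rightarrow> real"
    and \<mu>1 \<mu>2 :: "'a measure" and \<nu> :: "'b measure"
    and \<phi>1 \<phi>2 :: "'a \<Rightarrow> real" and U :: "'a set"
  assumes "compact (UNIV :: 'a set)" and "compact (UNIV :: 'b set)"
    and "continuous_on UNIV (\<lambda>p. c (fst p) (snd p))"
    and "entropy_fun h0" and "entropy_fun h1"
    and "\<mu>1 \<in> fin_borel_measures" and "\<mu>2 \<in> fin_borel_measures" and "\<nu> \<in> fin_borel_measures"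
    and "\<phi>1 \<in> Phi h0 h1 c \<mu>1 \<nu>" and "\<phi>2 \<in> Phi h0 h1 c \<mu>2 \<nu>"
    and "U \<in> sets borel"
    and "\<forall>A\<in>sets borel. A \<subseteq> U \<longrightarrow> emeasure \<mu>1 A \<le> emeasure \<mu>2 A"
    and "\<forall>x. x \<notin> U \<longrightarrow> \<phi>1 x \<le> \<phi>2 x"
  shows "(\<lambda>x. min (\<phi>1 x) (\<phi>2 x)) \<in> Phi h0 h1 c \<mu>1 \<nu>
       \<and> (\<lambda>x. max (\<phi>1 x) (\<phi>2 x)) \<in> Phi h0 h1 c \<mu>2 \<nu>
       \<and> (\<forall>x\<in>supp_diff \<mu>2 \<mu>1. - conj_fun h0 (- \<phi>1 x) \<le> - conj_fun h0 (- \<phi>2 x))"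
proof -
  note conj_mono = monoD[OF mono_conj_fun[OF assms(4)]]
  define g where "g = (\<lambda>x. conj_fun h0 (- \<phi>2 x) - conj_fun h0 (- max (\<phi>1 x) (\<phi>2 x)))"
  have g_nonneg: "0 \<le> g x" for x
    using conj_mono[of "- max (\<phi>1 x) (\<phi>2 x)" "- \<phi>2 x"] by (simp add: g_def)
  have g_outside: "g x = 0" if "x \<notin> U" for x using assms(13) that by (simp add: g_def max_def)
  have g_cont: "continuous_on UNIV g"
    using assms(9,10) unfolding g_def Phi_def
    by (intro continuous_intros continuous_on_conj_fun_compose[OF assms(4)]) auto
  obtain K where K: "\<And>x. g x \<le> K" using compact_UNIV_continuous_bounded[OF assms(1) g_cont] by (metis abs_le_D1)
  have "(\<integral>x. g x \<partial>\<mu>1) \<le> (\<integral>x. g x \<partial>\<mu>2)"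
    by (rule integral_le_of_emeasure_le_on[OF assms(6,7,11,12) borel_measurable_continuous_onI[OF g_cont]
          g_nonneg K g_outside])
  then have optimal: "(\<lambda>x. min (\<phi>1 x) (\<phi>2 x)) \<in> Phi h0 h1 c \<mu>1 \<nu> \<and> (\<lambda>x. max (\<phi>1 x) (\<phi>2 x)) \<in> Phi h0 h1 c \<mu>2 \<nu>"
    and g_balanced: "(\<integral>x. g x \<partial>\<mu>1) = (\<integral>x. g x \<partial>\<mu>2)"
    using min_max_in_Phi_if_gap_nonneg[OF assms(1-10)] unfolding g_def by blast+
  have "- conj_fun h0 (- \<phi>1 x) \<le> - conj_fun h0 (- \<phi>2 x)" if "x \<in> supp_diff \<mu>2 \<mu>1" for x
  proof (rule ccontr)
    assume "\<not> - conj_fun h0 (- \<phi>1 x) \<le> - conj_fun h0 (- \<phi>2 x)"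
    then have "0 < g x" using conj_mono[of "- \<phi>2 x" "- \<phi>1 x"] by (auto simp: g_def max_def)
    then show False
      using integral_less_at_supp_diff[OF assms(6,7,11,12) g_cont g_nonneg K g_outside that] g_balanced
      by simp
  qed
  with optimal show ?thesis by blast
qed

end
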